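(* $\operatorname{BSR}(5,4)\ge 11$. In particular, the biquadratic form \[P(\mathbf{x},\mathbf{y})=x_1^2y_1^2+x_1^2y_2^2+x_1^2y_3^2+x_2^2y_1^2+x_2^2y_4^2+x_3^2y_2^2+x_3^2y_4^2+x_4^2y_3^2+x_4^2y_4^2+x_5^2y_1^2+(x_2y_3+x_5y_4)^2\] on $\mathbb{R}^5\times\mathbb{R}^4$ has SOS rank $11$ (i.e., it cannot be written as a sum of fewer than 11 squares of bilinear forms).
   Context: An $m\times n$ biquadratic form is a polynomial $P(\mathbf{x},\mathbf{y})=\sum_{i,k=1}^m\sum_{j,l=1}^n a_{ijkl}x_ix_ky_jy_l$ with real coefficients, $\mathbf{x}\in\mathbb{R}^m$, $\mathbf{y}\in\mathbb{R}^n$. It is SOS if $P=\sum_{p=1}^r f_p^2$ for some real bilinear forms $f_p(\mathbf{x},\mathbf{y})=\sum_{i,j}c^{(p)}_{ij}x_iy_j$; the least such $r$ is the SOS rank $\operatorname{sos}(P)$. $\operatorname{BSR}(m,n)$ is the maximum of $\operatorname{sos}(P)$ over all $m\times n$ SOS biquadratic forms $P$. *)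

theory Defs
  imports Complex_Main "HOL-Library.Extended_Nat"
begin

text \<open>Vectors in R^m are modelled as functions nat => real, of which only the
coordinates 0..m-1 are used (0-based indexing: x_1 is x 0).\<close>

definition bilinear_form :: "nat \<Rightarrow> nat \<Rightarrow> (nat \<Rightarrow> nat \<Rightarrow> real)
    \<Rightarrow> (nat \<Rightarrow> real) \<Rightarrow> (nat \<Rightarrow> real) \<Rightarrow> real" where
  "bilinear_form m n c = (\<lambda>x y. \<Sum>i<m. \<Sum>j<n. c i j * x i * y j)"

definition is_biquadratic :: "nat \<Rightarrow> nat \<Rightarrow> ((nat \<Rightarrow> real) \<Rightarrow> (nat \<Rightarrow> real) \<Rightarrow> real) \<Rightarrow> bool" where
  "is_biquadratic m n P \<longleftrightarrow> (\<exists>a :: nat \<Rightarrow> nat \<Rightarrow> nat \<Rightarrow> nat \<Rightarrow> real.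
     P = (\<lambda>x y. \<Sum>i<m. \<Sum>k<m. \<Sum>j<n. \<Sum>l<n. a i j k l * x i * x k * y j * y l))"

definition sos_with :: "nat \<Rightarrow> nat \<Rightarrow> ((nat \<Rightarrow> real) \<Rightarrow> (nat \<Rightarrow> real) \<Rightarrow> real) \<Rightarrow> nat \<Rightarrow> bool" where
  "sos_with m n P r \<longleftrightarrow> (\<exists>c :: nat \<Rightarrow> nat \<Rightarrow> nat \<Rightarrow> real.
     \<forall>x y. P x y = (\<Sum>p<r. (bilinear_form m n (c p) x y)\<^sup>2))"

definition is_sos :: "nat \<Rightarrow> nat \<Rightarrow> ((nat \<Rightarrow> real) \<Rightarrow> (nat \<Rightarrow> real) \<Rightarrow> real) \<Rightarrow> bool" where
  "is_sos m n P \<longleftrightarrow> (\<exists>r. sos_with m n P r)"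

definition sos_rank :: "nat \<Rightarrow> nat \<Rightarrow> ((nat \<Rightarrow> real) \<Rightarrow> (nat \<Rightarrow> real) \<Rightarrow> real) \<Rightarrow> nat" where
  "sos_rank m n P = (LEAST r. sos_with m n P r)"

text \<open>BSR(m,n), as a supremum in the extended naturals (so it is well defined a priori).\<close>
definition BSR :: "nat \<Rightarrow> nat \<Rightarrow> enat" where
  "BSR m n = (SUP P \<in> {P. is_biquadratic m n P \<and> is_sos m n P}. enat (sos_rank m n P))"

end

theory Submission
  imports Defs "HOL-Library.Indicator_Function"
begin

(* If P = sum_p f_p^2 with f_p(x,y) = sum_ij c_p(i,j) x_i y_j, consider the columns
   v_ij = (c_p(i,j))_p in R^r. Polarising the identity shows that <v_ij, v_kl> + <v_il, v_kj>
   is twice the corresponding coefficient of the polar form of P. Hence v_ij = 0 off the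
   support of P, and the Gram matrix of the twelve remaining columns is forced except along
   4-cycles of the support. The square (x_1 y_2 + x_4 y_3)^2 forces v_12 = v_43, which
   settles those entries, so eleven of the columns are orthonormal in R^r and r >= 11 by
   Bessel's inequality. *)

lemma bilinear_form_add_left:
  "bilinear_form m n C (\<lambda>q. x q + x' q) y = bilinear_form m n C x y + bilinear_form m n C x' y"
  by (simp add: bilinear_form_def algebra_simps sum.distrib)

lemma bilinear_form_add_right:
  "bilinear_form m n C x (\<lambda>q. y q + y' q) = bilinear_form m n C x y + bilinear_form m n C x y'"
  by (simp add: bilinear_form_def algebra_simps sum.distrib)

lemma bilinear_form_scale_left:
  "bilinear_form m n C (\<lambda>q. a * x q) y = a * bilinear_form m n C x y"
  by (simp add: bilinear_form_def algebra_simps sum_distrib_left)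

lemma bilinear_form_scale_right:
  "bilinear_form m n C x (\<lambda>q. a * y q) = a * bilinear_form m n C x y"
  by (simp add: bilinear_form_def algebra_simps sum_distrib_left)

lemma bilinear_form_indicator:
  assumes "i < m" "j < n"
  shows "bilinear_form m n C (indicator {i}) (indicator {j}) = C i j"
proof -
  have "C a b * indicator {i} a * indicator {j} b = (if b = j then if a = i then C i j else 0 else 0)"
    for a b :: nat
    by (simp add: indicator_def)
  then show ?thesis
    using assms by (simp add: bilinear_form_def)
qed

definition matrix_unit :: "nat \<Rightarrow> nat \<Rightarrow> nat \<Rightarrow> nat \<Rightarrow> real" where
  "matrix_unit a b = (\<lambda>i j. of_bool (i = a \<and> j = b))"

lemma bilinear_form_matrix_unit:
  assumes "a < m" "b < n"
  shows "bilinear_form m n (matrix_unit a b) x y = x a * y b"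
proof -
  have "matrix_unit a b i j * x i * y j = (if j = b then if i = a then x a * y b else 0 else 0)" for i j
    by (simp add: matrix_unit_def)
  then show ?thesis
    using assms by (simp add: bilinear_form_def)
qed

lemma bilinear_form_add_coeffs:
  "bilinear_form m n (\<lambda>i j. C i j + D i j) x y = bilinear_form m n C x y + bilinear_form m n D x y"
  by (simp add: bilinear_form_def algebra_simps sum.distrib)

lemma bilinear_form_square:
  "(bilinear_form m n C x y)\<^sup>2 =
     (\<Sum>i<m. \<Sum>k<m. \<Sum>j<n. \<Sum>l<n. C i j * C k l * x i * x k * y j * y l)"
  by (simp add: bilinear_form_def power2_eq_square sum_product algebra_simps)

definition gram ::
    "(nat \<Rightarrow> nat \<Rightarrow> nat \<Rightarrow> real) \<Rightarrow> nat \<Rightarrow> nat \<Rightarrow> nat \<Rightarrow> nat \<Rightarrow> nat \<Rightarrow> real" where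
  "gram c r i j k l = (\<Sum>p<r. c p i j * c p k l)"

(* polar_form Q i k j l = B(e_i, e_k; e_j, e_l), where for biquadratic Q the form B is
   the unique one symmetric in each pair of arguments with Q(x, y) = B(x, x; y, y). *)
definition polar_form ::
    "((nat \<Rightarrow> real) \<Rightarrow> (nat \<Rightarrow> real) \<Rightarrow> real) \<Rightarrow> nat \<Rightarrow> nat \<Rightarrow> nat \<Rightarrow> nat \<Rightarrow> real" where
  "polar_form Q i k j l = (\<Sum>s\<in>{-1, 1}. \<Sum>t\<in>{-1, 1}. s * t *
     Q (\<lambda>q. indicator {i} q + s * indicator {k} q) (\<lambda>q. indicator {j} q + t * indicator {l} q)) / 16"

lemma polar_form_sum_squares:
  assumes Q: "\<And>x y. Q x y = (\<Sum>p<r. (bilinear_form m n (c p) x y)\<^sup>2)"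
    and "i < m" "k < m" "j < n" "l < n"
  shows "gram c r i j k l + gram c r i l k j = 2 * polar_form Q i k j l"
proof -
  have eval: "bilinear_form m n C (\<lambda>q. indicator {i} q + s * indicator {k} q)
      (\<lambda>q. indicator {j} q + t * indicator {l} q) = C i j + t * C i l + s * C k j + s * t * C k l"
    for C s t
    using assms(2-) by (simp add: bilinear_form_add_left bilinear_form_add_right
        bilinear_form_scale_left bilinear_form_scale_right bilinear_form_indicator algebra_simps)
  have "(a + b + c + d)\<^sup>2 - (a + b - c - d)\<^sup>2 - (a - b + c - d)\<^sup>2 + (a - b - c + d)\<^sup>2
      = 8 * (a * d + b * c)" for a b c d :: real
    by algebra
  then show ?thesis
    by (simp add: polar_form_def gram_def Q eval sum_subtractf sum.distrib[symmetric]
        sum_distrib_left algebra_simps)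
qed

lemma gram_sym: "gram c r i j k l = gram c r k l i j"
  by (simp add: gram_def mult.commute)

lemma gram_eq_0_if_diag_eq_0:
  assumes "gram c r i j i j = 0"
  shows "gram c r i j k l = 0"
proof -
  have "\<forall>p\<in>{..<r}. c p i j * c p i j = 0"
    using assms by (subst sum_nonneg_eq_0_iff[symmetric]) (auto simp: gram_def)
  then show ?thesis
    by (simp add: gram_def)
qed

lemma gram_eq_if_parallel:
  assumes "gram c r i j i j + gram c r k l k l = 2 * gram c r i j k l"
  shows "gram c r i j a b = gram c r k l a b"
proof -
  have "(\<Sum>p<r. (c p i j - c p k l)\<^sup>2) = 0"
    using assms by (simp add: gram_def power2_eq_square algebra_simps sum.distrib
        sum_subtractf sum_distrib_left)
  then have "\<forall>p\<in>{..<r}. (c p i j - c p k l)\<^sup>2 = 0"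
    by (subst sum_nonneg_eq_0_iff[symmetric]) auto
  then show ?thesis
    unfolding gram_def by (intro sum.cong) auto
qed

lemma gram_diag_eq_polar_form:
  assumes Q: "\<And>x y. Q x y = (\<Sum>p<r. (bilinear_form m n (c p) x y)\<^sup>2)"
    and "i < m" "j < n"
  shows "gram c r i j i j = polar_form Q i i j j"
  using polar_form_sum_squares[OF Q, of i i j j] assms(2,3) by simp

lemma gram_eq_0_if_polar_form_eq_0:
  assumes Q: "\<And>x y. Q x y = (\<Sum>p<r. (bilinear_form m n (c p) x y)\<^sup>2)"
    and "i < m" "j < n" "k < m" "l < n" "polar_form Q i k j l = 0"
    and "i = k \<or> j = l \<or> polar_form Q i i l l = 0 \<or> polar_form Q k k j j = 0"
  shows "gram c r i j k l = 0"
proof -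
  have "gram c r i j k l + gram c r i l k j = 0"
    using polar_form_sum_squares[OF Q] assms(2-6) by simp
  moreover have "polar_form Q i i l l = 0 \<Longrightarrow> gram c r i l k j = 0"
    using gram_diag_eq_polar_form[OF Q, of i l] assms(2,5) by (simp add: gram_eq_0_if_diag_eq_0)
  moreover have "polar_form Q k k j j = 0 \<Longrightarrow> gram c r i l k j = 0"
    using gram_diag_eq_polar_form[OF Q, of k j] assms(3,4)
    by (simp add: gram_eq_0_if_diag_eq_0 gram_sym[of c r i l])
  ultimately show ?thesis
    using assms(7) by (auto simp: gram_sym[of c r i l])
qed

lemma bessel_inequality:
  fixes w :: "nat \<Rightarrow> nat \<Rightarrow> real"
  assumes orth: "\<And>s t. s < N \<Longrightarrow> t < N \<Longrightarrow> (\<Sum>p<r. w s p * w t p) = of_bool (s = t)"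
    and "q < r"
  shows "(\<Sum>s<N. (w s q)\<^sup>2) \<le> 1"
proof -
  define e :: "nat \<Rightarrow> real" where "e = indicator {q}"
  define u where "u p = (\<Sum>s<N. w s q * w s p)" for p
  have "(\<Sum>p<r. (u p)\<^sup>2) = (\<Sum>s<N. \<Sum>t<N. w s q * w t q * (\<Sum>p<r. w s p * w t p))"
    by (simp add: u_def power2_eq_square sum_distrib_left sum_distrib_right
        sum.swap[of _ "{..<r}"] algebra_simps)
  also have "\<dots> = (\<Sum>s<N. \<Sum>t<N. if t = s then w s q * w t q else 0)"
    by (intro sum.cong) (auto simp: orth)
  finally have norm_u: "(\<Sum>p<r. (u p)\<^sup>2) = (\<Sum>s<N. (w s q)\<^sup>2)"
    by (simp add: power2_eq_square)
  have inner_e_u: "(\<Sum>p<r. e p * u p) = (\<Sum>s<N. (w s q)\<^sup>2)"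
    using \<open>q < r\<close> by (simp add: e_def indicator_def u_def power2_eq_square)
  have norm_e: "(\<Sum>p<r. (e p)\<^sup>2) = 1"
    using \<open>q < r\<close> by (simp add: e_def indicator_def power2_eq_square)
  have "0 \<le> (\<Sum>p<r. (e p - u p)\<^sup>2)"
    by (simp add: sum_nonneg)
  also have "\<dots> = (\<Sum>p<r. (e p)\<^sup>2) + (\<Sum>p<r. (u p)\<^sup>2) - 2 * (\<Sum>p<r. e p * u p)"
    by (simp add: power2_diff sum.distrib sum_subtractf sum_distrib_left mult.assoc)
  finally show ?thesis
    by (simp add: norm_e norm_u inner_e_u)
qed

lemma card_le_dim_if_orthonormal:
  fixes w :: "nat \<Rightarrow> nat \<Rightarrow> real"
  assumes orth: "\<And>s t. s < N \<Longrightarrow> t < N \<Longrightarrow> (\<Sum>p<r. w s p * w t p) = of_bool (s = t)"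
  shows "N \<le> r"
proof -
  have "real N = (\<Sum>s<N. \<Sum>p<r. (w s p)\<^sup>2)"
    by (simp add: orth power2_eq_square)
  also have "\<dots> = (\<Sum>p<r. \<Sum>s<N. (w s p)\<^sup>2)"
    by (rule sum.swap)
  also have "\<dots> \<le> (\<Sum>p<r. 1)"
    by (intro sum_mono bessel_inequality[OF orth]) auto
  finally show ?thesis
    by simp
qed

lemma sos_with_imp_is_biquadratic:
  assumes "sos_with m n P r"
  shows "is_biquadratic m n P"
proof -
  obtain c where P: "\<And>x y. P x y = (\<Sum>p<r. (bilinear_form m n (c p) x y)\<^sup>2)"
    using assms unfolding sos_with_def by blast
  have "P x y = (\<Sum>i<m. \<Sum>k<m. \<Sum>j<n. \<Sum>l<n. gram c r i j k l * x i * x k * y j * y l)" for x y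
    by (simp add: P bilinear_form_square gram_def sum_distrib_right sum.swap[of _ "{..<r}"])
  then show ?thesis
    unfolding is_biquadratic_def by blast
qed

lemma sos_rank_eqI:
  assumes "sos_with m n P r" and "\<And>r'. sos_with m n P r' \<Longrightarrow> r \<le> r'"
  shows "sos_rank m n P = r"
  unfolding sos_rank_def using assms by (rule Least_equality)

lemma sos_rank_le_BSR:
  assumes "is_biquadratic m n P" and "is_sos m n P"
  shows "enat (sos_rank m n P) \<le> BSR m n"
  unfolding BSR_def using assms by (intro SUP_upper) simp

definition witness_form :: "(nat \<Rightarrow> real) \<Rightarrow> (nat \<Rightarrow> real) \<Rightarrow> real" where
  "witness_form = (\<lambda>x y.
      (x 0)\<^sup>2 * (y 0)\<^sup>2 + (x 0)\<^sup>2 * (y 1)\<^sup>2 + (x 0)\<^sup>2 * (y 2)\<^sup>2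
    + (x 1)\<^sup>2 * (y 0)\<^sup>2 + (x 1)\<^sup>2 * (y 3)\<^sup>2
    + (x 2)\<^sup>2 * (y 1)\<^sup>2 + (x 2)\<^sup>2 * (y 3)\<^sup>2
    + (x 3)\<^sup>2 * (y 2)\<^sup>2 + (x 3)\<^sup>2 * (y 3)\<^sup>2
    + (x 4)\<^sup>2 * (y 0)\<^sup>2
    + (x 1 * y 2 + x 4 * y 3)\<^sup>2)"

lemma witness_form_sos: "sos_with 5 4 witness_form 11"
proof -
  define c where "c = [matrix_unit 0 0, matrix_unit 0 1, matrix_unit 0 2, matrix_unit 1 0,
    matrix_unit 1 3, matrix_unit 2 1, matrix_unit 2 3, matrix_unit 3 2, matrix_unit 3 3,
    matrix_unit 4 0, \<lambda>i j. matrix_unit 1 2 i j + matrix_unit 4 3 i j]"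
  have "witness_form x y = (\<Sum>p<11. (bilinear_form 5 4 (c ! p) x y)\<^sup>2)" for x y
    by (simp add: lessThan_nat_numeral c_def bilinear_form_matrix_unit bilinear_form_add_coeffs
        witness_form_def power_mult_distrib)
  then show ?thesis
    unfolding sos_with_def by blast
qed

lemma witness_form_sos_length_ge:
  assumes "sos_with 5 4 witness_form r"
  shows "11 \<le> r"
proof -
  obtain c where rep: "\<And>x y. witness_form x y = (\<Sum>p<r. (bilinear_form 5 4 (c p) x y)\<^sup>2)"
    using assms unfolding sos_with_def by blast
  define G where "G = gram c r"
  define B where "B = polar_form witness_form"
  have polar: "G i j k l + G i l k j = 2 * B i k j l" if "i < 5" "j < 4" "k < 5" "l < 4" for i j k l
    unfolding G_def B_def using polar_form_sum_squares[OF rep] that by blast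
  have diag: "G i j i j = B i i j j" if "i < 5" "j < 4" for i j
    unfolding G_def B_def using gram_diag_eq_polar_form[OF rep] that by blast
  have offdiag: "G i j k l = 0"
    if "i < 5" "j < 4" "k < 5" "l < 4" "B i k j l = 0"
      and "i = k \<or> j = l \<or> B i i l l = 0 \<or> B k k j j = 0" for i j k l
    using gram_eq_0_if_polar_form_eq_0[OF rep] that unfolding G_def B_def by blast
  note B_eval = B_def polar_form_def witness_form_def indicator_def
  have "G 4 2 1 3 = 0"
    using diag[of 4 2] unfolding G_def by (simp add: gram_eq_0_if_diag_eq_0 B_eval)
  then have "G 4 3 4 3 + G 1 2 1 2 = 2 * G 4 3 1 2"
    using diag[of 4 3] diag[of 1 2] polar[of 4 3 1 2] by (simp add: B_eval)
  then have parallel: "G 4 3 a b = G 1 2 a b" for a b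
    unfolding G_def by (rule gram_eq_if_parallel)
  have G_sym: "G i j k l = G k l i j" for i j k l
    by (simp add: G_def gram_sym)
  \<comment> \<open>The entries not covered by offdiag: both partner positions (i,l), (k,j) are in the support.\<close>
  have G_10_43: "G 1 0 4 3 = 0"
    using parallel[of 1 0] offdiag[of 1 0 1 2] G_sym by (simp add: B_eval)
  have G_13_40: "G 1 3 4 0 = 0"
    using polar[of 1 3 4 0] G_10_43 by (simp add: B_eval)
  have G_02_10: "G 0 2 1 0 = 0"
    using polar[of 0 2 1 0] parallel[of 0 0] offdiag[of 0 0 4 3] G_sym by (simp add: B_eval)
  have G_13_32: "G 1 3 3 2 = 0"
    using polar[of 1 3 3 2] parallel[of 3 3] offdiag[of 4 3 3 3] G_sym by (simp add: B_eval)
  \<comment> \<open>The support of the witness form minus (1,2), whose column coincides with that of (4,3).\<close>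
  define support :: "(nat \<times> nat) list" where
    "support = [(0,0), (0,1), (0,2), (1,0), (1,3), (2,1), (2,3), (3,2), (3,3), (4,0), (4,3)]"
  define w where "w s p = c p (fst (support ! s)) (snd (support ! s))" for s p
  have orthonormal: "(\<Sum>p<r. w s p * w t p) = of_bool (s = t)" if "s < 11" "t < 11" for s t
  proof -
    have G_sym_0: "G k l i j = 0" if "G i j k l = 0" for i j k l
      using that G_sym by simp
    note special = G_10_43 G_13_40 G_02_10 G_13_32
    have "\<forall>s\<in>{..<11}. \<forall>t\<in>{..<11}.
        G (fst (support ! s)) (snd (support ! s)) (fst (support ! t)) (snd (support ! t)) =
          of_bool (s = t)"
      by (simp del: One_nat_def add: lessThan_nat_numeral support_def diag offdiag
          special special[THEN G_sym_0] B_eval)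
    then show ?thesis
      using that by (simp add: w_def G_def gram_def)
  qed
  then show ?thesis
    by (rule card_le_dim_if_orthonormal)
qed

theorem corollary5p2:
  fixes P :: "(nat \<Rightarrow> real) \<Rightarrow> (nat \<Rightarrow> real) \<Rightarrow> real"
  defines "P \<equiv> (\<lambda>x y.
      (x 0)\<^sup>2 * (y 0)\<^sup>2 + (x 0)\<^sup>2 * (y 1)\<^sup>2 + (x 0)\<^sup>2 * (y 2)\<^sup>2
    + (x 1)\<^sup>2 * (y 0)\<^sup>2 + (x 1)\<^sup>2 * (y 3)\<^sup>2
    + (x 2)\<^sup>2 * (y 1)\<^sup>2 + (x 2)\<^sup>2 * (y 3)\<^sup>2
    + (x 3)\<^sup>2 * (y 2)\<^sup>2 + (x 3)\<^sup>2 * (y 3)\<^sup>2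
    + (x 4)\<^sup>2 * (y 0)\<^sup>2
    + (x 1 * y 2 + x 4 * y 3)\<^sup>2)"
  shows "is_biquadratic 5 4 P \<and> is_sos 5 4 P \<and> sos_rank 5 4 P = 11 \<and> BSR 5 4 \<ge> 11"
proof -
  have P: "P = witness_form"
    unfolding P_def witness_form_def ..
  have sos: "sos_with 5 4 P 11"
    using witness_form_sos by (simp add: P)
  have rank: "sos_rank 5 4 P = 11"
    using sos witness_form_sos_length_ge by (intro sos_rank_eqI) (auto simp: P)
  have biquadratic: "is_biquadratic 5 4 P"
    using sos by (rule sos_with_imp_is_biquadratic)
  have is_sos: "is_sos 5 4 P"
    using sos unfolding is_sos_def by blast
  have "11 \<le> BSR 5 4"
    using sos_rank_le_BSR[OF biquadratic is_sos] rank by (simp add: numeral_eq_enat)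
  then show ?thesis
    using biquadratic is_sos rank by blast
qed

end
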